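(* Under the setting of Theorem 1 (with $\mathcal{S}$, $h$, $m$, $\delta=\operatorname{TV}(m,h)>0$, $n,k$, $\alpha\in[0,1]$ with $(1-\alpha)nk\in\mathbb{Z}$, $H_{long}=h^{\otimes nk}$ and $M_{long}=m^{\otimes (1-\alpha)nk}\otimes h^{\otimes \alpha nk}$), every measurable detector score $D:\mathcal{S}^{nk}\to\mathbb{R}$ satisfies $$\operatorname{AUROC}(D)\le 1-\tfrac{1}{2}(1-\delta)^{2nk(1-\alpha)}.$$
   Context: For probability measures $P,Q$, $\operatorname{TV}(P,Q)=\sup_A|P(A)-Q(A)|$ over measurable sets $A$. For a score $D$, with $X\sim M_{long}$ and $Y\sim H_{long}$ independent, $\operatorname{AUROC}(D)=\Pr(D(X)>D(Y))+\tfrac12\Pr(D(X)=D(Y))$, i.e. the area under the ROC curve (true positive rate on $M_{long}$ against false positive rate on $H_{long}$) of the detector that thresholds $D$. The long human text consists of $nk$ i.i.d. sequences from $h$; the long machine text consists of $(1-\alpha)nk$ independent sequences from $m$ and $\alpha nk$ independent sequences from $h$. *)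

theory Defs
  imports "HOL-Probability.Probability"
begin

definition TV :: "'a measure \<Rightarrow> 'a measure \<Rightarrow> real" where
  "TV P Q = (SUP A \<in> sets P. \<bar>measure P A - measure Q A\<bar>)"

definition AUROC :: "'b measure \<Rightarrow> 'b measure \<Rightarrow> ('b \<Rightarrow> real) \<Rightarrow> real" where
  "AUROC Mlong Hlong D =
     measure (Mlong \<Otimes>\<^sub>M Hlong) {p \<in> space (Mlong \<Otimes>\<^sub>M Hlong). D (fst p) > D (snd p)}
     + 1/2 * measure (Mlong \<Otimes>\<^sub>M Hlong) {p \<in> space (Mlong \<Otimes>\<^sub>M Hlong). D (fst p) = D (snd p)}"

text \<open>Long texts: nk sequences; machine text has the first L = (1-alpha)nk from m, rest from h.\<close>
definition H_long :: "'a measure \<Rightarrow> nat \<Rightarrow> (nat \<Rightarrow> 'a) measure" where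
  "H_long h N = PiM {..<N} (\<lambda>_. h)"

definition M_long :: "'a measure \<Rightarrow> 'a measure \<Rightarrow> nat \<Rightarrow> nat \<Rightarrow> (nat \<Rightarrow> 'a) measure" where
  "M_long m h L N = PiM {..<N} (\<lambda>i. if i < L then m else h)"

end

(*
  Write m = f \<nu> and h = g \<nu> for a common dominating measure \<nu>; then the overlap
  \<integral> min f g d\<nu> is at least 1 - TV m h.  On the product space, the density R that is
  min f g on the L machine-written coordinates and g on the others lies below the
  densities of both M_long and H_long, and its total mass is at least (1 - \<delta>)^L.
  With H the Heaviside step (H 0 = 1/2), 1 - AUROC is the integral of H (D y - D x)
  over M_long \<times> H_long, which is at least the same integral against R(x) R(y);
  since H t + H (-t) = 1, swapping x and y shows that the latter is (\<integral> R)^2 / 2.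
*)
theory Submission
  imports Defs
begin

lemma abs_measure_diff_le_1:
  assumes "prob_space m" "prob_space h"
  shows "\<bar>measure m A - measure h A\<bar> \<le> 1"
  using assms by (smt (verit) prob_space.prob_le_1 measure_nonneg)

lemma measure_diff_le_TV:
  assumes "prob_space m" "prob_space h" "A \<in> sets m"
  shows "\<bar>measure m A - measure h A\<bar> \<le> TV m h"
  unfolding TV_def using assms abs_measure_diff_le_1 by (intro cSUP_upper bdd_aboveI2) auto

lemma TV_le_1:
  assumes "prob_space m" "prob_space h"
  shows "TV m h \<le> 1"
  unfolding TV_def using assms abs_measure_diff_le_1 by (intro cSUP_least) auto

lemma common_dominating_densities:
  assumes "prob_space m" "prob_space h" "sets m = sets h"
  obtains \<nu> f g where "finite_measure \<nu>" "sets \<nu> = sets m"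
    "f \<in> borel_measurable \<nu>" "g \<in> borel_measurable \<nu>"
    "density \<nu> f = m" "density \<nu> g = h"
proof -
  interpret m: prob_space m by fact
  interpret h: prob_space h by fact
  define \<nu> where "\<nu> = sup_measure' m h"
  have ssh: "sets h = sets m" using assms(3) by simp
  have sets_\<nu>: "sets \<nu> = sets m"
    unfolding \<nu>_def by (simp add: sets_sup_measure'[OF ssh])
  then have space_\<nu>: "space \<nu> = space m"
    by (rule sets_eq_imp_space_eq)
  have "emeasure \<nu> (space m) = (SUP Y\<in>sets m. emeasure m (space m \<inter> Y) + emeasure h (space m \<inter> - Y))"
    unfolding \<nu>_def by (rule emeasure_sup_measure'[OF ssh]) simp
  also have "\<dots> \<le> 1 + 1"
    by (intro SUP_least add_mono m.emeasure_le_1 h.emeasure_le_1)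
  finally have "finite_measure \<nu>"
    using space_\<nu> by (intro finite_measureI) (auto simp: top_unique)
  then interpret \<nu>: finite_measure \<nu> .
  have "absolutely_continuous \<nu> m" "absolutely_continuous \<nu> h"
    using le_emeasure_sup_measure'1[OF ssh] le_emeasure_sup_measure'2[OF ssh] sets_\<nu> ssh
    unfolding absolutely_continuous_def \<nu>_def
    by (auto simp: null_sets_def) (metis le_zero_eq)+
  then obtain f g where "f \<in> borel_measurable \<nu>" "density \<nu> f = m"
      "g \<in> borel_measurable \<nu>" "density \<nu> g = h"
    using \<nu>.Radon_Nikodym sets_\<nu> ssh by metis
  with that \<open>finite_measure \<nu>\<close> sets_\<nu> show ?thesis by blast
qed

lemma nn_integral_prob_density_eq_1:
  assumes "f \<in> borel_measurable \<nu>" "prob_space (density \<nu> f)"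
  shows "(\<integral>\<^sup>+x. f x \<partial>\<nu>) = 1"
proof -
  have "(\<integral>\<^sup>+x. f x \<partial>\<nu>) = emeasure (density \<nu> f) (space \<nu>)"
    using assms(1) by (subst emeasure_density) (auto intro!: nn_integral_cong)
  then show ?thesis
    using prob_space.emeasure_space_1[OF assms(2)] by simp
qed

lemma one_minus_TV_le_nn_integral_min:
  assumes [measurable]: "f \<in> borel_measurable \<nu>" "g \<in> borel_measurable \<nu>"
    and m: "density \<nu> f = m" "prob_space m"
    and h: "density \<nu> g = h" "prob_space h"
  shows "ennreal (1 - TV m h) \<le> (\<integral>\<^sup>+x. min (f x) (g x) \<partial>\<nu>)"
proof -
  interpret m: prob_space m by fact
  interpret h: prob_space h by fact
  define A where "A = {x \<in> space \<nu>. g x < f x}"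
  have A[measurable]: "A \<in> sets \<nu>" unfolding A_def by measurable
  have int_f: "(\<integral>\<^sup>+x. f x \<partial>\<nu>) = 1"
    using m by (intro nn_integral_prob_density_eq_1) auto
  have m_A: "emeasure m A = (\<integral>\<^sup>+x. f x * indicator A x \<partial>\<nu>)"
    by (simp add: m(1)[symmetric] emeasure_density)
  have h_A: "emeasure h A = (\<integral>\<^sup>+x. g x * indicator A x \<partial>\<nu>)"
    by (simp add: h(1)[symmetric] emeasure_density)
  have "(\<integral>\<^sup>+x. min (f x) (g x) \<partial>\<nu>) + emeasure m A
      = (\<integral>\<^sup>+x. min (f x) (g x) + f x * indicator A x \<partial>\<nu>)"
    unfolding m_A by (intro nn_integral_add[symmetric]) auto
  also have "\<dots> = (\<integral>\<^sup>+x. f x + g x * indicator A x \<partial>\<nu>)"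
    by (intro nn_integral_cong) (auto simp: A_def indicator_def min_def add.commute)
  also have "\<dots> = 1 + emeasure h A"
    unfolding h_A int_f[symmetric] by (intro nn_integral_add) auto
  finally have split: "(\<integral>\<^sup>+x. min (f x) (g x) \<partial>\<nu>) + emeasure m A = 1 + emeasure h A" .
  have "(\<integral>\<^sup>+x. min (f x) (g x) \<partial>\<nu>) \<le> 1"
    unfolding int_f[symmetric] by (intro nn_integral_mono) simp
  then obtain c where c: "(\<integral>\<^sup>+x. min (f x) (g x) \<partial>\<nu>) = ennreal c" "0 \<le> c"
    by (cases "\<integral>\<^sup>+x. min (f x) (g x) \<partial>\<nu>" rule: ennreal_cases) (auto simp: top_unique)
  have "A \<in> sets m" using A by (simp add: m(1)[symmetric])
  have "ennreal (c + measure m A) = ennreal (1 + measure h A)"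
    using split c by (simp add: m.emeasure_eq_measure h.emeasure_eq_measure)
  then have "c + measure m A = 1 + measure h A"
    using c(2) by (subst (asm) ennreal_inj) auto
  moreover have "\<bar>measure m A - measure h A\<bar> \<le> TV m h"
    using measure_diff_le_TV[OF m(2) h(2) \<open>A \<in> sets m\<close>] .
  ultimately show ?thesis
    unfolding c(1) by (intro ennreal_leI) linarith
qed

lemma density_PiM_eq_PiM_density:
  assumes fin: "finite I" and sf: "sigma_finite_measure M"
    and [measurable]: "\<And>i. q i \<in> borel_measurable M"
    and sfd: "\<And>i. sigma_finite_measure (density M (q i))"
  shows "density (PiM I (\<lambda>_. M)) (\<lambda>x. \<Prod>i\<in>I. q i (x i)) = PiM I (\<lambda>i. density M (q i))"
proof -
  interpret P: product_sigma_finite "\<lambda>i. density M (q i)"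
    using sfd by (simp add: product_sigma_finite_def)
  interpret Q: product_sigma_finite "\<lambda>_. M"
    using sf by (simp add: product_sigma_finite_def)
  show ?thesis
  proof (rule P.PiM_eqI[OF fin])
    show "sets (density (PiM I (\<lambda>_. M)) (\<lambda>x. \<Prod>i\<in>I. q i (x i)))
        = sets (PiM I (\<lambda>i. density M (q i)))"
      unfolding sets_density by (rule sets_PiM_cong) simp_all
  next
    fix A assume A: "\<And>i. i \<in> I \<Longrightarrow> A i \<in> sets (density M (q i))"
    then have A': "\<And>i. i \<in> I \<Longrightarrow> A i \<in> sets M" by simp
    have PA: "Pi\<^sub>E I A \<in> sets (PiM I (\<lambda>_. M))"
      using sets_PiM_I_finite[OF fin, of A "\<lambda>_. M"] A' by blast
    have "emeasure (density (PiM I (\<lambda>_. M)) (\<lambda>x. \<Prod>i\<in>I. q i (x i))) (Pi\<^sub>E I A)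
       = (\<integral>\<^sup>+x. (\<Prod>i\<in>I. q i (x i)) * indicator (Pi\<^sub>E I A) x \<partial>PiM I (\<lambda>_. M))"
      using PA by (subst emeasure_density) auto
    also have "\<dots> = (\<integral>\<^sup>+x. (\<Prod>i\<in>I. q i (x i) * indicator (A i) (x i)) \<partial>PiM I (\<lambda>_. M))"
    proof (intro nn_integral_cong)
      fix x assume "x \<in> space (PiM I (\<lambda>_. M))"
      then have "x \<in> extensional I" by (simp add: space_PiM PiE_def)
      then show "(\<Prod>i\<in>I. q i (x i)) * indicator (Pi\<^sub>E I A) x
          = (\<Prod>i\<in>I. q i (x i) * indicator (A i) (x i))"
        by (auto simp: prod.distrib indicator_def PiE_def Pi_def prod_zero_iff fin)
    qed
    also have "\<dots> = (\<Prod>i\<in>I. \<integral>\<^sup>+y. q i y * indicator (A i) y \<partial>M)"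
      using A' by (intro Q.product_nn_integral_prod fin) auto
    also have "\<dots> = (\<Prod>i\<in>I. emeasure (density M (q i)) (A i))"
      using A' by (intro prod.cong refl) (simp add: emeasure_density)
    finally show "emeasure (density (PiM I (\<lambda>_. M)) (\<lambda>x. \<Prod>i\<in>I. q i (x i))) (Pi\<^sub>E I A)
        = (\<Prod>i\<in>I. emeasure (density M (q i)) (A i))" .
  qed
qed

lemma nn_integral_PiM_prod_if_less:
  fixes a b :: "'a \<Rightarrow> ennreal"
  assumes "sigma_finite_measure \<nu>" "a \<in> borel_measurable \<nu>" "b \<in> borel_measurable \<nu>" "L \<le> N"
  shows "(\<integral>\<^sup>+x. (\<Prod>i<N. (if i < L then a else b) (x i)) \<partial>PiM {..<N} (\<lambda>_. \<nu>))
    = (\<integral>\<^sup>+x. a x \<partial>\<nu>) ^ L * (\<integral>\<^sup>+x. b x \<partial>\<nu>) ^ (N - L)"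
proof -
  interpret product_sigma_finite "\<lambda>_. \<nu>"
    using assms(1) by (simp add: product_sigma_finite_def)
  have "(\<integral>\<^sup>+x. (\<Prod>i<N. (if i < L then a else b) (x i)) \<partial>PiM {..<N} (\<lambda>_. \<nu>))
      = (\<Prod>i<N. if i < L then (\<integral>\<^sup>+x. a x \<partial>\<nu>) else (\<integral>\<^sup>+x. b x \<partial>\<nu>))"
    using assms(2,3) by (subst product_nn_integral_prod) (auto intro!: prod.cong)
  also have "\<dots> = (\<integral>\<^sup>+x. a x \<partial>\<nu>) ^ L * (\<integral>\<^sup>+x. b x \<partial>\<nu>) ^ (N - L)"
  proof -
    have "{..<N} \<inter> {i. i < L} = {..<L}" "{..<N} \<inter> - {i. i < L} = {L..<N}"
      using assms(4) by auto
    then show ?thesis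
      by (simp add: prod.If_cases)
  qed
  finally show ?thesis .
qed

lemma M_long_eq_density:
  assumes "sigma_finite_measure \<nu>" "f \<in> borel_measurable \<nu>" "g \<in> borel_measurable \<nu>"
    and "density \<nu> f = m" "density \<nu> g = h" "prob_space m" "prob_space h"
  shows "M_long m h L N
    = density (PiM {..<N} (\<lambda>_. \<nu>)) (\<lambda>x. \<Prod>i<N. (if i < L then f else g) (x i))"
proof -
  have "(\<lambda>i. if i < L then m else h) = (\<lambda>i. density \<nu> (if i < L then f else g))"
    using assms(4,5) by auto
  moreover have "sigma_finite_measure (density \<nu> (if i < L then f else g))" for i
    using assms(4-7) by (auto intro: prob_space_imp_sigma_finite)
  ultimately show ?thesis
    unfolding M_long_def using assms(1-3)
    by (subst density_PiM_eq_PiM_density) auto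
qed

lemma H_long_eq_M_long: "H_long h N = M_long m h 0 N"
  by (simp add: H_long_def M_long_def)

definition heaviside :: "real \<Rightarrow> real" where
  "heaviside t = (if 0 < t then 1 else if t = 0 then 1/2 else 0)"

lemma heaviside_add_neg: "heaviside t + heaviside (- t) = 1"
  by (simp add: heaviside_def)

lemma heaviside_nonneg: "0 \<le> heaviside t"
  by (simp add: heaviside_def)

lemma heaviside_le_1: "heaviside t \<le> 1"
  by (simp add: heaviside_def)

lemma borel_measurable_heaviside[measurable]: "heaviside \<in> borel_measurable borel"
  unfolding heaviside_def by measurable

lemma AUROC_eq_integral_heaviside:
  assumes "prob_space M" "prob_space H"
    and [measurable]: "D \<in> borel_measurable M" "D \<in> borel_measurable H"
  shows "AUROC M H D = (\<integral>p. heaviside (D (fst p) - D (snd p)) \<partial>(M \<Otimes>\<^sub>M H))"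
proof -
  interpret pair_prob_space M H
    using assms(1,2) by (simp add: pair_prob_space_def pair_sigma_finite_def prob_space_imp_sigma_finite)
  define gt where "gt = {p \<in> space (M \<Otimes>\<^sub>M H). D (fst p) > D (snd p)}"
  define eq where "eq = {p \<in> space (M \<Otimes>\<^sub>M H). D (fst p) = D (snd p)}"
  have [measurable]: "gt \<in> sets (M \<Otimes>\<^sub>M H)" "eq \<in> sets (M \<Otimes>\<^sub>M H)"
    unfolding gt_def eq_def by measurable
  have "(\<integral>p. heaviside (D (fst p) - D (snd p)) \<partial>(M \<Otimes>\<^sub>M H))
      = (\<integral>p. indicator gt p + 1/2 * indicator eq p \<partial>(M \<Otimes>\<^sub>M H))"
    by (intro Bochner_Integration.integral_cong) (auto simp: heaviside_def gt_def eq_def indicator_def)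
  also have "\<dots> = measure (M \<Otimes>\<^sub>M H) gt + 1/2 * measure (M \<Otimes>\<^sub>M H) eq"
    by (simp add: integrable_indicator_iff emeasure_eq_measure)
  finally show ?thesis
    unfolding AUROC_def gt_def eq_def by simp
qed

lemma one_minus_AUROC_eq_integral_heaviside:
  assumes "prob_space M" "prob_space H"
    and [measurable]: "D \<in> borel_measurable M" "D \<in> borel_measurable H"
  shows "1 - AUROC M H D = (\<integral>p. heaviside (D (snd p) - D (fst p)) \<partial>(M \<Otimes>\<^sub>M H))"
proof -
  interpret pair_prob_space M H
    using assms(1,2) by (simp add: pair_prob_space_def pair_sigma_finite_def prob_space_imp_sigma_finite)
  have integrable: "integrable (M \<Otimes>\<^sub>M H) (\<lambda>p. heaviside (D (fst p) - D (snd p)))"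
      "integrable (M \<Otimes>\<^sub>M H) (\<lambda>p. heaviside (D (snd p) - D (fst p)))"
    by (rule integrable_const_bound[where B = 1], simp add: heaviside_nonneg heaviside_le_1, measurable)+
  have "AUROC M H D + (\<integral>p. heaviside (D (snd p) - D (fst p)) \<partial>(M \<Otimes>\<^sub>M H))
      = (\<integral>p. heaviside (D (fst p) - D (snd p)) + heaviside (D (snd p) - D (fst p)) \<partial>(M \<Otimes>\<^sub>M H))"
    unfolding AUROC_eq_integral_heaviside[OF assms]
    by (intro Bochner_Integration.integral_add[symmetric] integrable)
  also have "\<dots> = 1"
    using heaviside_add_neg[of "D _ - D _"] prob_space by simp
  finally show ?thesis by simp
qed

lemma nn_integral_symmetric_kernel:
  fixes R :: "'a \<Rightarrow> ennreal" and \<phi> :: "'a \<Rightarrow> 'a \<Rightarrow> ennreal"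
  assumes "sigma_finite_measure P"
    and [measurable]: "R \<in> borel_measurable P" "(\<lambda>(x, y). \<phi> x y) \<in> borel_measurable (P \<Otimes>\<^sub>M P)"
    and sym: "\<And>x y. \<phi> x y + \<phi> y x = 1"
  shows "2 * (\<integral>\<^sup>+x. \<integral>\<^sup>+y. R x * R y * \<phi> x y \<partial>P \<partial>P) = (\<integral>\<^sup>+x. R x \<partial>P) ^ 2"
proof -
  interpret pair_sigma_finite P P
    using assms(1) by (simp add: pair_sigma_finite_def)
  define K where "K x y = R x * R y * \<phi> x y" for x y
  have K[measurable]: "(\<lambda>(x, y). K x y) \<in> borel_measurable (P \<Otimes>\<^sub>M P)"
    unfolding K_def by measurable
  have "(\<lambda>y. K x y) \<in> borel_measurable P" "(\<lambda>y. K y x) \<in> borel_measurable P" if "x \<in> space P" for x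
    using measurable_Pair2[OF K that] measurable_Pair1[OF K that] by simp_all
  then have "(\<integral>\<^sup>+x. \<integral>\<^sup>+y. K x y \<partial>P \<partial>P) + (\<integral>\<^sup>+x. \<integral>\<^sup>+y. K y x \<partial>P \<partial>P)
      = (\<integral>\<^sup>+x. \<integral>\<^sup>+y. K x y + K y x \<partial>P \<partial>P)"
    by (simp add: nn_integral_add[symmetric] cong: nn_integral_cong)
  also have "\<dots> = (\<integral>\<^sup>+x. \<integral>\<^sup>+y. R x * R y \<partial>P \<partial>P)"
  proof -
    have "K x y + K y x = R x * R y" for x y
      using sym[of x y] unfolding K_def by (metis distrib_left mult.commute mult_1_right)
    then show ?thesis by simp
  qed
  also have "\<dots> = (\<integral>\<^sup>+x. R x \<partial>P) ^ 2"
    by (simp add: nn_integral_cmult nn_integral_multc power2_eq_square)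
  finally show ?thesis
    using Fubini'[of K] by (simp add: K_def mult_2)
qed

lemma nn_integral_common_part_le_density:
  fixes F G R :: "'a \<Rightarrow> ennreal" and \<phi> :: "'a \<Rightarrow> 'a \<Rightarrow> ennreal"
  assumes "sigma_finite_measure P"
    and [measurable]: "F \<in> borel_measurable P" "G \<in> borel_measurable P"
    "R \<in> borel_measurable P" "(\<lambda>(x, y). \<phi> x y) \<in> borel_measurable (P \<Otimes>\<^sub>M P)"
    and "\<And>x. R x \<le> F x" "\<And>x. R x \<le> G x"
  shows "(\<integral>\<^sup>+x. \<integral>\<^sup>+y. R x * R y * \<phi> x y \<partial>P \<partial>P)
      \<le> (\<integral>\<^sup>+x. \<integral>\<^sup>+y. \<phi> x y \<partial>density P G \<partial>density P F)"
proof -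
  interpret sigma_finite_measure P by fact
  have slice: "(\<lambda>y. H y * \<phi> x y) \<in> borel_measurable P"
    if "x \<in> space P" "H \<in> borel_measurable P" for x H
    using measurable_Pair2[OF assms(5) that(1)] that(2) by simp
  have "(\<integral>\<^sup>+x. \<integral>\<^sup>+y. R x * R y * \<phi> x y \<partial>P \<partial>P) = (\<integral>\<^sup>+x. R x * (\<integral>\<^sup>+y. R y * \<phi> x y \<partial>P) \<partial>P)"
    by (intro nn_integral_cong) (simp add: nn_integral_cmult[symmetric] mult.assoc slice)
  also have "\<dots> \<le> (\<integral>\<^sup>+x. F x * (\<integral>\<^sup>+y. G y * \<phi> x y \<partial>P) \<partial>P)"
    by (intro nn_integral_mono mult_mono assms(6,7)) auto
  also have "\<dots> = (\<integral>\<^sup>+x. \<integral>\<^sup>+y. G y * \<phi> x y \<partial>P \<partial>density P F)"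
    by (rule nn_integral_density[symmetric]) measurable
  also have "\<dots> = (\<integral>\<^sup>+x. \<integral>\<^sup>+y. \<phi> x y \<partial>density P G \<partial>density P F)"
    by (intro nn_integral_cong) (simp add: nn_integral_density slice)
  finally show ?thesis .
qed

lemma AUROC_density_le_common_part:
  fixes F G R :: "'a \<Rightarrow> ennreal" and D :: "'a \<Rightarrow> real"
  assumes P: "sigma_finite_measure P"
    and [measurable]: "F \<in> borel_measurable P" "G \<in> borel_measurable P" "R \<in> borel_measurable P"
      "D \<in> borel_measurable P"
    and prob: "prob_space (density P F)" "prob_space (density P G)"
    and R_le: "\<And>x. R x \<le> F x" "\<And>x. R x \<le> G x"
    and c: "0 \<le> c" "ennreal c \<le> (\<integral>\<^sup>+x. R x \<partial>P)"
  shows "AUROC (density P F) (density P G) D \<le> 1 - c ^ 2 / 2"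
proof -
  let ?M = "density P F" and ?H = "density P G"
  interpret pair_prob_space ?M ?H
    using prob by (simp add: pair_prob_space_def pair_sigma_finite_def prob_space_imp_sigma_finite)
  have complement: "1 - AUROC ?M ?H D = (\<integral>p. heaviside (D (snd p) - D (fst p)) \<partial>(?M \<Otimes>\<^sub>M ?H))"
    by (rule one_minus_AUROC_eq_integral_heaviside[OF prob]) measurable
  define \<phi> where "\<phi> x y = ennreal (heaviside (D y - D x))" for x y
  have \<phi>_measurable: "(\<lambda>(x, y). \<phi> x y) \<in> borel_measurable (P \<Otimes>\<^sub>M P)"
    unfolding \<phi>_def by measurable
  have \<phi>_sym: "\<phi> x y + \<phi> y x = 1" for x y
    using heaviside_add_neg[of "D y - D x"]
    by (simp add: \<phi>_def heaviside_nonneg ennreal_plus[symmetric] del: ennreal_plus)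
  have "ennreal (c ^ 2) \<le> (\<integral>\<^sup>+x. R x \<partial>P) ^ 2"
    using c by (simp add: ennreal_power[symmetric] power_mono)
  also have "\<dots> = 2 * (\<integral>\<^sup>+x. \<integral>\<^sup>+y. R x * R y * \<phi> x y \<partial>P \<partial>P)"
    using nn_integral_symmetric_kernel[OF P _ \<phi>_measurable \<phi>_sym] by simp
  also have "\<dots> \<le> 2 * (\<integral>\<^sup>+x. \<integral>\<^sup>+y. \<phi> x y \<partial>?H \<partial>?M)"
    using nn_integral_common_part_le_density[OF P _ _ _ \<phi>_measurable R_le] by (simp add: mult_left_mono)
  also have "\<dots> = 2 * (\<integral>\<^sup>+p. ennreal (heaviside (D (snd p) - D (fst p))) \<partial>(?M \<Otimes>\<^sub>M ?H))"
    unfolding \<phi>_def by (subst M2.nn_integral_fst[symmetric]) simp_all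
  also have "\<dots> = 2 * ennreal (1 - AUROC ?M ?H D)"
    unfolding complement
    by (subst nn_integral_eq_integral)
      (auto intro!: integrable_const_bound[where B = 1] simp: heaviside_nonneg heaviside_le_1)
  finally have "ennreal (c ^ 2) \<le> ennreal (2 * (1 - AUROC ?M ?H D))"
    by (metis ennreal_mult' ennreal_numeral zero_le_numeral)
  moreover have "0 \<le> 1 - AUROC ?M ?H D"
    unfolding complement by (intro Bochner_Integration.integral_nonneg heaviside_nonneg)
  ultimately show ?thesis
    by (simp add: ennreal_le_iff)
qed

lemma AUROC_M_long_le:
  assumes \<nu>: "sigma_finite_measure \<nu>"
    and [measurable]: "f \<in> borel_measurable \<nu>" "g \<in> borel_measurable \<nu>"
    and dens: "density \<nu> f = m" "density \<nu> g = h" "prob_space m" "prob_space h"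
    and "L \<le> N" and [measurable]: "D \<in> borel_measurable (PiM {..<N} (\<lambda>_. \<nu>))"
    and c: "0 \<le> c" "ennreal c \<le> (\<integral>\<^sup>+y. min (f y) (g y) \<partial>\<nu>)"
  shows "AUROC (M_long m h L N) (H_long h N) D \<le> 1 - c ^ (2 * L) / 2"
proof -
  have [measurable]: "(if b then f else g) \<in> borel_measurable \<nu>"
    "(if b then (\<lambda>y. min (f y) (g y)) else g) \<in> borel_measurable \<nu>" for b
    by simp_all
  define P where "P = PiM {..<N} (\<lambda>_. \<nu>)"
  interpret product_sigma_finite "\<lambda>_. \<nu>"
    using \<nu> by (simp add: product_sigma_finite_def)
  have P: "sigma_finite_measure P"
    unfolding P_def by (rule sigma_finite) simp
  define R where "R x = (\<Prod>i<N. (if i < L then (\<lambda>y. min (f y) (g y)) else g) (x i))" for x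
  have "ennreal (c ^ L) \<le> (\<integral>\<^sup>+y. min (f y) (g y) \<partial>\<nu>) ^ L"
    using c by (simp add: ennreal_power[symmetric] power_mono)
  also have "\<dots> = (\<integral>\<^sup>+x. R x \<partial>P)"
    using nn_integral_PiM_prod_if_less[OF \<nu> _ _ \<open>L \<le> N\<close>] nn_integral_prob_density_eq_1[of g \<nu>] dens(2,4)
    by (simp add: R_def P_def)
  finally have R_int: "ennreal (c ^ L) \<le> (\<integral>\<^sup>+x. R x \<partial>P)" .
  have M_long: "M_long m h L' N = density P (\<lambda>x. \<Prod>i<N. (if i < L' then f else g) (x i))" for L'
    unfolding P_def by (rule M_long_eq_density[OF \<nu> _ _ dens]) measurable
  have prob: "prob_space (M_long m h L' N)" for L'
    unfolding M_long_def using dens(3,4) by (intro prob_space_PiM) auto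
  have "AUROC (M_long m h L N) (M_long m h 0 N) D \<le> 1 - (c ^ L) ^ 2 / 2"
    unfolding M_long
  proof (rule AUROC_density_le_common_part[OF P _ _ _ _ prob[of L, unfolded M_long] prob[of 0, unfolded M_long] _ _ _ R_int])
    show "(\<lambda>x. \<Prod>i<N. (if i < L then f else g) (x i)) \<in> borel_measurable P"
      "(\<lambda>x. \<Prod>i<N. (if i < 0 then f else g) (x i)) \<in> borel_measurable P"
      "R \<in> borel_measurable P" "D \<in> borel_measurable P"
      unfolding P_def R_def by measurable
  qed (auto simp: R_def \<open>0 \<le> c\<close> intro!: prod_mono_ennreal)
  then show ?thesis
    by (simp add: H_long_eq_M_long[of h N m] mult.commute[of 2 L] power_mult)
qed

theorem theorem2:
  fixes S :: "'a measure" and h m :: "'a measure"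
    and n k :: nat and \<alpha> \<delta> :: real and L :: nat
    and D :: "(nat \<Rightarrow> 'a) \<Rightarrow> real"
  assumes "prob_space h" and "prob_space m"
    and "sets h = sets S" and "sets m = sets S"
    and "\<delta> = TV m h" and "\<delta> > 0"
    and "0 \<le> \<alpha>" and "\<alpha> \<le> 1"
    and "real L = (1 - \<alpha>) * real n * real k"
    and "D \<in> borel_measurable (PiM {..<n*k} (\<lambda>_. S))"
  shows "AUROC (M_long m h L (n*k)) (H_long h (n*k)) D \<le> 1 - 1/2 * (1 - \<delta>) ^ (2 * L)"
proof -
  obtain \<nu> f g where \<nu>: "finite_measure \<nu>" "sets \<nu> = sets m"
    and [measurable]: "f \<in> borel_measurable \<nu>" "g \<in> borel_measurable \<nu>"
    and dens: "density \<nu> f = m" "density \<nu> g = h"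
    using common_dominating_densities[OF assms(2,1)] assms(3,4) by metis
  then have \<nu>_sf: "sigma_finite_measure \<nu>"
    by (simp add: finite_measure_def)
  have "real L \<le> real (n * k)"
    using assms(7-9) mult_left_le_one_le[of "real n * real k" "1 - \<alpha>"] by (simp add: mult.assoc)
  then have "L \<le> n * k"
    by (simp only: of_nat_le_iff)
  have "sets (PiM {..<n*k} (\<lambda>_. \<nu>)) = sets (PiM {..<n*k} (\<lambda>_. S))"
    using \<nu>(2) assms(4) by (intro sets_PiM_cong) auto
  then have "D \<in> borel_measurable (PiM {..<n*k} (\<lambda>_. \<nu>))"
    using assms(10) measurable_cong_sets by blast
  moreover have "ennreal (1 - \<delta>) \<le> (\<integral>\<^sup>+y. min (f y) (g y) \<partial>\<nu>)"
    using one_minus_TV_le_nn_integral_min[OF _ _ dens(1) assms(2) dens(2) assms(1)] assms(5) by simp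
  moreover have "0 \<le> 1 - \<delta>"
    using TV_le_1[OF assms(2,1)] assms(5) by simp
  ultimately show ?thesis
    using AUROC_M_long_le[OF \<nu>_sf _ _ dens assms(2,1) \<open>L \<le> n * k\<close>] by simp
qed

end
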